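(* Let $\ell$ be a prime and let $G$ be a subgroup of $\mathrm{GSp}_4(\mathbb{F}_\ell)$ maximal among Hasse subgroups of $\mathrm{GSp}_4(\mathbb{F}_\ell)$, such that $G\cap\mathrm{Sp}_4(\mathbb{F}_\ell)$ acts reducibly on $\mathbb{F}_\ell^4$. Then $\lambda(G)=\mathbb{F}_\ell^\times$.
   Context: Fix a non-degenerate alternating form on $\mathbb{F}_\ell^4$ with matrix $J$. $\mathrm{GSp}_4(\mathbb{F}_\ell)=\{M\in\mathrm{GL}_4(\mathbb{F}_\ell): M^TJM=kJ\text{ for some }k\in\mathbb{F}_\ell^\times\}$, with multiplier $\lambda(M)=k$, and $\mathrm{Sp}_4(\mathbb{F}_\ell)=\ker\lambda$. A subgroup of $\mathrm{GL}_n(\mathbb{F}_\ell)$ is Hasse if it acts irreducibly on $\mathbb{F}_\ell^n$ and each of its elements has an eigenvalue in $\mathbb{F}_\ell$. *)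

theory Defs
  imports "HOL-Analysis.Analysis"
begin

text \<open>Matrices over a field 'a act on column vectors 'a^'n.
  J is the Gram matrix of the fixed non-degenerate alternating form.\<close>

definition alternating_nondeg :: "'a::field^'n^'n \<Rightarrow> bool" where
  "alternating_nondeg J \<longleftrightarrow> transpose J = - J \<and> (\<forall>i. J$i$i = 0) \<and> invertible J"

definition GSp :: "'a::field^'n^'n \<Rightarrow> ('a^'n^'n) set" where
  "GSp J = {M. invertible M \<and> (\<exists>k. k \<noteq> 0 \<and> transpose M ** J ** M = mat k ** J)}"

definition multiplier :: "'a::field^'n^'n \<Rightarrow> 'a^'n^'n \<Rightarrow> 'a" where
  "multiplier J M = (THE k. transpose M ** J ** M = mat k ** J)"

definition Sp :: "'a::field^'n^'n \<Rightarrow> ('a^'n^'n) set" where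
  "Sp J = {M \<in> GSp J. multiplier J M = 1}"

definition matrix_subgroup :: "('a::field^'n^'n) set \<Rightarrow> bool" where
  "matrix_subgroup G \<longleftrightarrow> G \<subseteq> {M. invertible M} \<and> mat 1 \<in> G
     \<and> (\<forall>A\<in>G. \<forall>B\<in>G. A ** B \<in> G) \<and> (\<forall>A\<in>G. matrix_inv A \<in> G)"

definition invariant_subspace :: "('a::field^'n^'n) set \<Rightarrow> ('a^'n) set \<Rightarrow> bool" where
  "invariant_subspace G W \<longleftrightarrow> vec.subspace W \<and> (\<forall>M\<in>G. \<forall>w\<in>W. M *v w \<in> W)"

definition acts_irreducibly :: "('a::field^'n^'n) set \<Rightarrow> bool" where
  "acts_irreducibly G \<longleftrightarrow> (\<forall>W. invariant_subspace G W \<longrightarrow> W = {0} \<or> W = UNIV)"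

definition has_eigenvalue :: "'a::field^'n^'n \<Rightarrow> bool" where
  "has_eigenvalue M \<longleftrightarrow> (\<exists>c v. v \<noteq> 0 \<and> M *v v = c *s v)"

definition Hasse :: "('a::field^'n^'n) set \<Rightarrow> bool" where
  "Hasse G \<longleftrightarrow> acts_irreducibly G \<and> (\<forall>M\<in>G. has_eigenvalue M)"

definition maximal_Hasse_in :: "('a::field^'n^'n) set \<Rightarrow> ('a^'n^'n) set \<Rightarrow> bool" where
  "maximal_Hasse_in A G \<longleftrightarrow> matrix_subgroup G \<and> G \<subseteq> A \<and> Hasse G \<and>
     (\<forall>H. matrix_subgroup H \<and> H \<subseteq> A \<and> Hasse H \<and> G \<subseteq> H \<longrightarrow> H = G)"

end

(*
  A maximal Hasse subgroup G of GSp_4 contains every nonzero scalar matrix c, because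
  adjoining scalars to a Hasse subgroup keeps it Hasse (same invariant subspaces, and
  eigenvectors survive scaling). A scalar c has multiplier c^2, so a value k missed by
  the multiplier is a non-square. In the finite field the non-squares form a single
  coset of the squares, so if some g in G had a non-square multiplier m, then
  k = m d^2 would be the multiplier of g * d for a suitable scalar d. Hence all multipliers
  of G are squares c^2, every g in G is c times an element of G \<inter> Sp, and G \<inter> Sp has
  the same invariant subspaces as the irreducible group G.
*)
theory Submission
  imports Defs "HOL-Computational_Algebra.Nth_Powers"
begin

lemma matrix_mul_mat_left: "(mat c :: 'a::semiring_1^'n^'n) ** A = (\<chi> i j. c * A$i$j)"
  by (simp add: vec_eq_iff matrix_matrix_mult_def mat_def if_distrib if_distribR sum.delta' cong: if_cong)

lemma matrix_mul_mat_right: "(A :: 'a::comm_semiring_1^'n^'m) ** mat c = (\<chi> i j. c * A$i$j)"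
  by (simp add: vec_eq_iff matrix_matrix_mult_def mat_def if_distrib if_distribR sum.delta' mult.commute cong: if_cong)

lemma mat_mult_commute: "(mat c :: 'a::comm_semiring_1^'n^'n) ** A = A ** mat c"
  by (simp add: matrix_mul_mat_left matrix_mul_mat_right)

lemma mat_mult_mat: "(mat a :: 'a::semiring_1^'n^'n) ** mat b = mat (a * b)"
  by (simp only: matrix_mul_mat_left) (simp add: vec_eq_iff mat_def)

lemma scalar_matrix_mult_ac:
  "(mat a :: 'a::comm_semiring_1^'n^'n) ** A ** (mat b ** B) = mat (a * b) ** (A ** B)"
proof -
  have "mat a ** A ** (mat b ** B) = mat a ** ((A ** mat b) ** B)"
    by (simp only: matrix_mul_assoc)
  also have "\<dots> = mat (a * b) ** (A ** B)"
    by (simp only: mat_mult_commute[of b A, symmetric] mat_mult_mat matrix_mul_assoc)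
  finally show ?thesis .
qed

lemma matrix_vector_mul_mat: "(mat c :: 'a::semiring_1^'n^'n) *v x = c *s x"
  by (simp add: vec_eq_iff matrix_vector_mult_def mat_def if_distrib if_distribR sum.delta' cong: if_cong)

lemma mat_inject: "(mat a :: 'a::zero^'n^'n) = mat b \<longleftrightarrow> a = b"
proof
  assume "(mat a :: 'a^'n^'n) = mat b"
  then have "(mat a :: 'a^'n^'n) $ i $ i = mat b $ i $ i" for i
    by simp
  then show "a = b"
    by (simp add: mat_def)
qed simp

lemma invertible_mat:
  assumes "(c::'a::field) \<noteq> 0" shows "invertible (mat c :: 'a^'n^'n)"
  unfolding invertible_def using assms by (intro exI[of _ "mat (inverse c)"]) (simp add: mat_mult_mat)

lemma matrix_inv_inverse:
  assumes "invertible A"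
  shows "A ** matrix_inv A = mat 1" "matrix_inv A ** A = mat 1"
  using someI_ex[OF assms[unfolded invertible_def]] unfolding matrix_inv_def by blast+

lemma matrix_inv_unique:
  fixes A :: "'a::field^'n^'n"
  assumes "A ** B = mat 1"
  shows "matrix_inv A = B"
proof -
  have "invertible A"
    using assms matrix_left_right_inverse invertible_def by blast
  then have "matrix_inv A = (matrix_inv A ** A) ** B"
    using assms by (simp flip: matrix_mul_assoc)
  with \<open>invertible A\<close> show ?thesis
    by (simp add: matrix_inv_inverse)
qed

lemma matrix_inv_mat_mult:
  fixes A :: "'a::field^'n^'n"
  assumes "c \<noteq> 0" "invertible A"
  shows "matrix_inv (mat c ** A) = mat (inverse c) ** matrix_inv A"
  using assms by (intro matrix_inv_unique) (simp add: scalar_matrix_mult_ac matrix_inv_inverse)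

lemma multiplier_eqI:
  fixes J :: "'a::field^'n^'n"
  assumes "invertible J" "transpose M ** J ** M = mat k ** J"
  shows "multiplier J M = k"
  unfolding multiplier_def
proof (rule the_equality)
  fix k' assume "transpose M ** J ** M = mat k' ** J"
  with assms have "mat k' ** J ** matrix_inv J = mat k ** J ** matrix_inv J"
    by simp
  with assms(1) show "k' = k"
    by (simp add: matrix_inv_inverse mat_inject flip: matrix_mul_assoc)
qed (fact assms(2))

lemma GSp_similitude:
  fixes J :: "'a::field^'n^'n"
  assumes "invertible J" "M \<in> GSp J"
  shows "transpose M ** J ** M = mat (multiplier J M) ** J"
  using assms multiplier_eqI unfolding GSp_def by fastforce

lemma multiplier_nonzero:
  fixes J :: "'a::field^'n^'n"
  assumes "invertible J" "M \<in> GSp J"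
  shows "multiplier J M \<noteq> 0"
  using assms multiplier_eqI unfolding GSp_def by fastforce

lemma similitude_mult:
  fixes J :: "'a::comm_semiring_1^'n^'n"
  assumes "transpose A ** J ** A = mat a ** J" "transpose B ** J ** B = mat b ** J"
  shows "transpose (A ** B) ** J ** (A ** B) = mat (a * b) ** J"
proof -
  have "transpose (A ** B) ** J ** (A ** B) = transpose B ** (transpose A ** J ** A) ** B"
    by (simp add: matrix_transpose_mul matrix_mul_assoc)
  also have "\<dots> = (transpose B ** mat a) ** J ** B"
    by (simp only: assms(1) matrix_mul_assoc)
  also have "\<dots> = mat a ** (transpose B ** J ** B)"
    by (simp only: mat_mult_commute[of a "transpose B", symmetric] matrix_mul_assoc)
  finally show ?thesis
    by (simp add: assms(2) matrix_mul_assoc mat_mult_mat)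
qed

lemma similitude_mat: "transpose (mat c) ** J ** mat c = mat (c^2) ** (J :: 'a::comm_semiring_1^'n^'n)"
proof -
  have "transpose (mat c) ** J ** mat c = mat c ** (mat c ** J)"
    by (simp only: transpose_mat mat_mult_commute[of c J] matrix_mul_assoc)
  then show ?thesis
    by (simp add: matrix_mul_assoc mat_mult_mat power2_eq_square)
qed

lemma multiplier_mat:
  fixes J :: "'a::field^'n^'n"
  assumes "invertible J"
  shows "multiplier J (mat c) = c^2"
  using assms similitude_mat by (rule multiplier_eqI)

lemma multiplier_mult:
  fixes J :: "'a::field^'n^'n"
  assumes "invertible J" "A \<in> GSp J" "B \<in> GSp J"
  shows "multiplier J (A ** B) = multiplier J A * multiplier J B"
  using assms by (intro multiplier_eqI[OF assms(1)] similitude_mult[OF GSp_similitude GSp_similitude])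

lemma GSp_mult:
  fixes J :: "'a::field^'n^'n"
  assumes "A \<in> GSp J" "B \<in> GSp J"
  shows "A ** B \<in> GSp J"
proof -
  obtain a b where "a \<noteq> 0" "transpose A ** J ** A = mat a ** J"
    and "b \<noteq> 0" "transpose B ** J ** B = mat b ** J"
    using assms unfolding GSp_def by blast
  then have "transpose (A ** B) ** J ** (A ** B) = mat (a * b) ** J"
    by (intro similitude_mult)
  moreover have "invertible (A ** B)"
    using assms unfolding GSp_def by (blast intro: invertible_mult)
  moreover have "a * b \<noteq> 0"
    using \<open>a \<noteq> 0\<close> \<open>b \<noteq> 0\<close> by simp
  ultimately show ?thesis
    unfolding GSp_def by blast
qed

lemma mat_in_GSp: "(c::'a::field) \<noteq> 0 \<Longrightarrow> mat c \<in> GSp J"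
  using similitude_mat[of c J] invertible_mat unfolding GSp_def by (auto intro!: exI[of _ "c^2"])

definition scalar_multiples :: "('a::field^'n^'n) set \<Rightarrow> ('a^'n^'n) set" where
  "scalar_multiples G = {mat c ** M | c M. c \<noteq> 0 \<and> M \<in> G}"

lemma scalar_multiplesI: "c \<noteq> 0 \<Longrightarrow> M \<in> G \<Longrightarrow> mat c ** M \<in> scalar_multiples G"
  unfolding scalar_multiples_def by blast

lemma scalar_multiplesE:
  assumes "A \<in> scalar_multiples G"
  obtains c M where "c \<noteq> 0" "M \<in> G" "A = mat c ** M"
  using assms unfolding scalar_multiples_def by blast

lemma subset_scalar_multiples: "G \<subseteq> scalar_multiples G"
  using scalar_multiplesI[of 1] by fastforce

lemma matrix_subgroup_scalar_multiples:
  assumes "matrix_subgroup G"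
  shows "matrix_subgroup (scalar_multiples G)"
  unfolding matrix_subgroup_def
proof (intro conjI ballI subsetI)
  fix A assume "A \<in> scalar_multiples G"
  with assms show "A \<in> {M. invertible M}"
    by (auto elim!: scalar_multiplesE intro!: invertible_mult invertible_mat simp: matrix_subgroup_def)
next
  show "mat 1 \<in> scalar_multiples G"
    using assms subset_scalar_multiples unfolding matrix_subgroup_def by blast
next
  fix A B assume "A \<in> scalar_multiples G" "B \<in> scalar_multiples G"
  with assms show "A ** B \<in> scalar_multiples G"
    by (auto elim!: scalar_multiplesE intro!: scalar_multiplesI
        simp: scalar_matrix_mult_ac matrix_subgroup_def)
next
  fix A assume "A \<in> scalar_multiples G"
  then obtain c M where "c \<noteq> 0" "M \<in> G" "A = mat c ** M"
    by (rule scalar_multiplesE)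
  with assms have "matrix_inv A = mat (inverse c) ** matrix_inv M" "matrix_inv M \<in> G"
    unfolding matrix_subgroup_def by (auto simp: matrix_inv_mat_mult)
  with \<open>c \<noteq> 0\<close> show "matrix_inv A \<in> scalar_multiples G"
    by (simp add: scalar_multiplesI)
qed

lemma scalar_multiples_subset_GSp:
  assumes "G \<subseteq> GSp J"
  shows "scalar_multiples G \<subseteq> GSp J"
proof
  fix A assume "A \<in> scalar_multiples G"
  then obtain c M where "c \<noteq> 0" "M \<in> G" "A = mat c ** M"
    by (rule scalar_multiplesE)
  with assms show "A \<in> GSp J"
    using GSp_mult mat_in_GSp by blast
qed

lemma invariant_subspace_scalar_multiples:
  "invariant_subspace (scalar_multiples G) W \<longleftrightarrow> invariant_subspace G W"
proof
  assume inv: "invariant_subspace G W"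
  show "invariant_subspace (scalar_multiples G) W"
    unfolding invariant_subspace_def
  proof (intro conjI ballI)
    fix A w assume "A \<in> scalar_multiples G" and "w \<in> W"
    from \<open>A \<in> scalar_multiples G\<close> obtain c M where "c \<noteq> 0" "M \<in> G" "A = mat c ** M"
      by (rule scalar_multiplesE)
    then have "A *v w = c *s (M *v w)"
      by (simp add: matrix_vector_mul_mat flip: matrix_vector_mul_assoc)
    with inv \<open>M \<in> G\<close> \<open>w \<in> W\<close> show "A *v w \<in> W"
      unfolding invariant_subspace_def by (simp add: vec.subspace_scale)
  qed (use inv in \<open>simp add: invariant_subspace_def\<close>)
qed (use subset_scalar_multiples in \<open>auto simp: invariant_subspace_def\<close>)

lemma acts_irreducibly_superset:
  "acts_irreducibly G \<Longrightarrow> G \<subseteq> H \<Longrightarrow> acts_irreducibly H"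
  unfolding acts_irreducibly_def invariant_subspace_def by blast

lemma acts_irreducibly_scalar_multiples:
  "acts_irreducibly (scalar_multiples G) \<longleftrightarrow> acts_irreducibly G"
  by (simp add: acts_irreducibly_def invariant_subspace_scalar_multiples)

lemma has_eigenvalue_mat_mult:
  assumes "has_eigenvalue M"
  shows "has_eigenvalue (mat c ** M)"
proof -
  obtain a v where "v \<noteq> 0" "M *v v = a *s v"
    using assms unfolding has_eigenvalue_def by blast
  then have "(mat c ** M) *v v = (c * a) *s v"
    by (simp add: matrix_vector_mul_mat flip: matrix_vector_mul_assoc)
  with \<open>v \<noteq> 0\<close> show ?thesis
    unfolding has_eigenvalue_def by blast
qed

lemma Hasse_scalar_multiples: "Hasse G \<Longrightarrow> Hasse (scalar_multiples G)"
  unfolding Hasse_def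
  by (auto simp: acts_irreducibly_scalar_multiples elim!: scalar_multiplesE intro: has_eigenvalue_mat_mult)

lemma maximal_Hasse_in_GSp_mat:
  assumes "maximal_Hasse_in (GSp J) G" "c \<noteq> 0"
  shows "mat c \<in> G"
proof -
  have "scalar_multiples G = G"
    using assms(1) unfolding maximal_Hasse_in_def
    by (simp add: Hasse_scalar_multiples matrix_subgroup_scalar_multiples
        scalar_multiples_subset_GSp subset_scalar_multiples)
  moreover have "mat 1 \<in> G"
    using assms(1) unfolding maximal_Hasse_in_def matrix_subgroup_def by blast
  ultimately show ?thesis
    using scalar_multiplesI[OF assms(2), of "mat 1" G] by simp
qed

lemma card_nonzero_le_twice_card_squares:
  "card {x::'a::{field,finite}. x \<noteq> 0} \<le> 2 * card {x^2 | x::'a. x \<noteq> 0}"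
proof -
  let ?S = "{x^2 | x::'a. x \<noteq> 0}"
  have "{x::'a. x \<noteq> 0} = (\<Union>s\<in>?S. {x. x \<noteq> 0 \<and> x^2 = s})"
    by auto
  then have "card {x::'a. x \<noteq> 0} \<le> (\<Sum>s\<in>?S. card {x. x \<noteq> 0 \<and> x^2 = s})"
    by (simp add: card_UN_le)
  also have "\<dots> \<le> (\<Sum>s\<in>?S. 2)"
  proof (rule sum_mono)
    fix s assume "s \<in> ?S"
    then obtain y where "s = y^2"
      by blast
    then have "{x. x \<noteq> 0 \<and> x^2 = s} \<subseteq> {y, -y}"
      by (auto simp: power2_eq_iff)
    then have "card {x. x \<noteq> 0 \<and> x^2 = s} \<le> card {y, -y}"
      by (rule card_mono[rotated]) simp
    also have "\<dots> \<le> 2"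
      by (simp add: card_insert_if)
    finally show "card {x. x \<noteq> 0 \<and> x^2 = s} \<le> 2" .
  qed
  finally show ?thesis
    by simp
qed

lemma nonsquare_mult_nonsquare:
  fixes a b :: "'a::{field,finite}"
  assumes a: "\<not> is_square a" and b: "\<not> is_square b"
  shows "is_square (a * b)"
proof -
  let ?U = "{x::'a. x \<noteq> 0}" and ?S = "{x^2 | x::'a. x \<noteq> 0}"
  have "a \<noteq> 0"
    using a by auto
  have "a * x^2 \<in> ?U - ?S" if "x \<noteq> 0" for x
  proof
    show "a * x^2 \<in> ?U"
      using \<open>a \<noteq> 0\<close> that by simp
    show "a * x^2 \<notin> ?S"
    proof
      assume "a * x^2 \<in> ?S"
      then obtain y where "a * x^2 = y^2"
        by blast
      with that have "a = (y / x)^2"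
        by (simp add: field_simps)
      with a show False
        by (auto intro: is_nth_powerI)
    qed
  qed
  txt \<open>Multiplication by the non-square \<open>a\<close> maps the nonzero squares injectively into the
    non-squares, which are at most as many; so every non-square is \<open>a\<close> times a square.\<close>
  then have image_sub: "(*) a ` ?S \<subseteq> ?U - ?S"
    by fastforce
  have "card (?U - ?S) = card ?U - card ?S"
    by (intro card_Diff_subset) auto
  also have "\<dots> \<le> card ?S"
    using card_nonzero_le_twice_card_squares[where 'a='a] by linarith
  also have "\<dots> = card ((*) a ` ?S)"
    using \<open>a \<noteq> 0\<close> by (simp add: card_image inj_on_def)
  finally have "(*) a ` ?S = ?U - ?S"
    using image_sub by (intro card_seteq) auto
  moreover have "b \<in> ?U - ?S"
    using b by auto
  ultimately obtain x where "b = a * x^2"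
    by blast
  then have "a * b = (a * x)^2"
    by (simp add: power2_eq_square)
  then show ?thesis
    by (rule is_nth_powerI)
qed

lemma multiplier_image_eq_nonzero:
  fixes J :: "'a::{field,finite}^'n^'n"
  assumes J: "invertible J" and G: "G \<subseteq> GSp J"
    and scalars: "\<And>c. c \<noteq> 0 \<Longrightarrow> mat c \<in> G"
    and mult: "\<And>A B. A \<in> G \<Longrightarrow> B \<in> G \<Longrightarrow> A ** B \<in> G"
    and nonsquare: "M \<in> G" "\<not> is_square (multiplier J M)"
  shows "multiplier J ` G = {k. k \<noteq> 0}"
proof (rule equalityI)
  show "multiplier J ` G \<subseteq> {k. k \<noteq> 0}"
    using G multiplier_nonzero[OF J] by auto
next
  show "{k. k \<noteq> 0} \<subseteq> multiplier J ` G"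
  proof clarify
    fix k :: 'a assume "k \<noteq> 0"
    show "k \<in> multiplier J ` G"
    proof (cases "is_square k")
      case True
      then obtain c where "k = c^2"
        by (rule is_nth_powerE)
      with \<open>k \<noteq> 0\<close> have "c \<noteq> 0" "k = multiplier J (mat c)"
        by (auto simp: multiplier_mat[OF J])
      then show ?thesis
        using scalars by blast
    next
      case False
      let ?m = "multiplier J M"
      obtain d where d: "?m * k = d^2"
        using nonsquare_mult_nonsquare[OF nonsquare(2) False] by (rule is_nth_powerE)
      have "M \<in> GSp J"
        using G nonsquare(1) by blast
      then have "?m \<noteq> 0"
        by (rule multiplier_nonzero[OF J])
      with d \<open>k \<noteq> 0\<close> have "d / ?m \<noteq> 0"
        by auto
      then have "multiplier J (M ** mat (d / ?m)) = ?m * (d / ?m)^2"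
        using \<open>M \<in> GSp J\<close> by (simp add: multiplier_mult[OF J] multiplier_mat[OF J] mat_in_GSp)
      also have "\<dots> = k"
        using d \<open>?m \<noteq> 0\<close> by (simp add: power2_eq_square field_simps)
      finally show ?thesis
        using mult[OF nonsquare(1) scalars[OF \<open>d / ?m \<noteq> 0\<close>]] by (blast intro: sym)
    qed
  qed
qed

lemma subset_scalar_multiples_Sp:
  fixes J :: "'a::field^'n^'n"
  assumes J: "invertible J" and G: "G \<subseteq> GSp J"
    and scalars: "\<And>c. c \<noteq> 0 \<Longrightarrow> mat c \<in> G"
    and mult: "\<And>A B. A \<in> G \<Longrightarrow> B \<in> G \<Longrightarrow> A ** B \<in> G"
    and squares: "\<And>M. M \<in> G \<Longrightarrow> is_square (multiplier J M)"
  shows "G \<subseteq> scalar_multiples (G \<inter> Sp J)"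
proof
  fix M assume "M \<in> G"
  then obtain c where c: "multiplier J M = c^2"
    using squares by (blast elim: is_nth_powerE)
  with \<open>M \<in> G\<close> G multiplier_nonzero[OF J] have "c \<noteq> 0"
    by fastforce
  define h where "h = mat (inverse c) ** M"
  have "h \<in> G"
    unfolding h_def using \<open>c \<noteq> 0\<close> \<open>M \<in> G\<close> by (simp add: mult scalars)
  moreover have "multiplier J h = 1"
  proof -
    have "M \<in> GSp J"
      using G \<open>M \<in> G\<close> by blast
    then have "multiplier J h = (inverse c)^2 * c^2"
      unfolding h_def using \<open>c \<noteq> 0\<close> c
      by (simp add: multiplier_mult[OF J] multiplier_mat[OF J] mat_in_GSp)
    with \<open>c \<noteq> 0\<close> show ?thesis
      by (simp flip: power_mult_distrib)
  qed
  ultimately have "h \<in> G \<inter> Sp J"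
    using G unfolding Sp_def by blast
  moreover have "M = mat c ** h"
    unfolding h_def using \<open>c \<noteq> 0\<close> by (simp add: matrix_mul_assoc mat_mult_mat)
  ultimately show "M \<in> scalar_multiples (G \<inter> Sp J)"
    using \<open>c \<noteq> 0\<close> scalar_multiplesI by metis
qed

theorem lemma4p5:
  fixes J :: "'a::{field,finite}^4^4" and G :: "('a^4^4) set"
  assumes "prime CARD('a)"
    and "alternating_nondeg J"
    and "maximal_Hasse_in (GSp J) G"
    and "\<not> acts_irreducibly (G \<inter> Sp J)"
  shows "multiplier J ` G = {k. k \<noteq> 0}"
proof (rule ccontr)
  assume not_onto: "multiplier J ` G \<noteq> {k. k \<noteq> 0}"
  have J: "invertible J"
    using assms(2) unfolding alternating_nondeg_def by blast
  have G: "G \<subseteq> GSp J" and irreducible: "acts_irreducibly G"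
    and mult: "\<And>A B. A \<in> G \<Longrightarrow> B \<in> G \<Longrightarrow> A ** B \<in> G"
    using assms(3) unfolding maximal_Hasse_in_def Hasse_def matrix_subgroup_def by blast+
  have scalars: "\<And>c. c \<noteq> 0 \<Longrightarrow> mat c \<in> G"
    using assms(3) by (rule maximal_Hasse_in_GSp_mat)
  have "is_square (multiplier J M)" if "M \<in> G" for M
    using multiplier_image_eq_nonzero[OF J G scalars mult that] not_onto by blast
  then have "G \<subseteq> scalar_multiples (G \<inter> Sp J)"
    using subset_scalar_multiples_Sp[OF J G scalars mult] by blast
  then have "acts_irreducibly (G \<inter> Sp J)"
    using irreducible acts_irreducibly_superset acts_irreducibly_scalar_multiples by blast
  with assms(4) show False ..
qed

end
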